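(* Let $H$ be a non-zero real constant. Let $J\subset(0,\infty)$ be an open interval and $u:J\to\mathbb{R}$ a smooth function with $u'(\alpha)\neq0$ on $J$. Consider the rotational surface $\bar f(\alpha,v)=(\alpha\cos v,\ \alpha\sin v,\ u(\alpha))$ in $(\mathbb{R}^3,\|\cdot\|)$, oriented so that the horizontal component $(\eta_1,\eta_2)$ of its Birkhoff–Gauss map $\eta$ at $\bar f(\alpha,v)$ is a positive multiple of $-(\cos v,\sin v)$ (i.e. points toward the $x_3$-axis; equivalently, $\nabla\Phi(\eta)$ is a positive multiple of $f_u\times f_v$ for the height parametrization $f(u,v)=(\alpha(u)\cos v,\alpha(u)\sin v,u)$, $\alpha$ the local inverse of $u$). Then this surface has constant Minkowski mean curvature $H$ if and only if there are a constant $c_1$ and a fixed sign such that, for all $\alpha\in J$, $c_1-H\alpha^2>0$, $\alpha^{2m}>(c_1-H\alpha^2)^{2m}$, and $$u'(\alpha)=\pm\frac{(c_1-H\alpha^2)^{2m-1}}{\left\{\alpha^{2m}-(c_1-H\alpha^2)^{2m}\right\}^{\frac{2m-1}{2m}}},$$ i.e. $u(\alpha)=\pm\int\frac{(c_1-H\alpha^2)^{2m-1}}{\{\alpha^{2m}-(c_1-H\alpha^2)^{2m}\}^{\frac{2m-1}{2m}}}\,d\alpha$.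
   Context: Fix an integer $m\ge 2$. Let $\Phi(x_1,x_2,x_3)=(x_1^2+x_2^2)^m+x_3^{2m}$ and let $\|\cdot\|$ be the norm on $\mathbb{R}^3$ whose unit sphere is $S=\{x\in\mathbb{R}^3:\Phi(x)=1\}$ (a smooth, strictly convex surface). For a surface given by a parametrization $f(s,v)$, its Birkhoff–Gauss map $\eta$ is the map into $S$ defined by requiring $\eta\in S$ and $\nabla\Phi(\eta)=\mu\, f_s\times f_v$ for some function $\mu>0$, where $\times$ is the standard cross product (so the tangent plane of $S$ at $\eta(p)$ is parallel to $T_pM$, and $d\eta_p$ is an endomorphism of $T_pM$). The Minkowski mean curvature is $H=\tfrac12\operatorname{trace}(d\eta_p)$; its sign changes when the orientation is reversed. *)

theory Defs
  imports "HOL-Analysis.Analysis" "HOL-Analysis.Cross3"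
begin

text \<open>The gauge Phi(x) = (x1^2+x2^2)^m + x3^(2m); its unit level set is the unit
sphere S of the Minkowski norm.\<close>
definition Phi :: "nat \<Rightarrow> real^3 \<Rightarrow> real" where
  "Phi m x = ((x$1)^2 + (x$2)^2)^m + (x$3)^(2*m)"

definition gradPhi :: "nat \<Rightarrow> real^3 \<Rightarrow> real^3" where
  "gradPhi m x = vector
     [ 2 * real m * ((x$1)^2 + (x$2)^2)^(m - 1) * x$1,
       2 * real m * ((x$1)^2 + (x$2)^2)^(m - 1) * x$2,
       2 * real m * (x$3)^(2*m - 1) ]"

text \<open>e is the Birkhoff-Gauss image for the (oriented) normal N:
 e in S and grad Phi(e) = mu * N with mu > 0.\<close>
definition bg_point :: "nat \<Rightarrow> real^3 \<Rightarrow> real^3 \<Rightarrow> bool" where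
  "bg_point m N e \<longleftrightarrow> Phi m e = 1 \<and> (\<exists>\<mu>>0. gradPhi m e = \<mu> *\<^sub>R N)"

definition fbar :: "(real \<Rightarrow> real) \<Rightarrow> real \<times> real \<Rightarrow> real^3" where
  "fbar u p = vector [fst p * cos (snd p), fst p * sin (snd p), u (fst p)]"

definition rot_normal :: "(real \<Rightarrow> real) \<Rightarrow> real \<times> real \<Rightarrow> real^3" where
  "rot_normal u p = cross3
      (vector_derivative (\<lambda>a. fbar u (a, snd p)) (at (fst p)))
      (vector_derivative (\<lambda>w. fbar u (fst p, w)) (at (snd p)))"

definition rot_eta :: "nat \<Rightarrow> (real \<Rightarrow> real) \<Rightarrow> real \<times> real \<Rightarrow> real^3" where
  "rot_eta m u p = (THE e.
      (bg_point m (rot_normal u p) e \<or> bg_point m (- rot_normal u p) e) \<and>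
      (\<exists>l>0. e$1 = - l * cos (snd p) \<and> e$2 = - l * sin (snd p)))"

text \<open>Minkowski mean curvature Hv at parameter p of the surface f with Birkhoff-Gauss map
eta: H = 1/2 trace(d eta_p), where d eta_p is the endomorphism of T_pM sending
f_s to eta_s and f_v to eta_v.\<close>
definition mink_mean_curv ::
  "(real \<times> real \<Rightarrow> real^3) \<Rightarrow> (real \<times> real \<Rightarrow> real^3) \<Rightarrow> real \<times> real \<Rightarrow> real \<Rightarrow> bool" where
  "mink_mean_curv f eta p Hv \<longleftrightarrow>
     (\<exists>Df Deta a11 a12 a21 a22.
        (f has_derivative Df) (at p) \<and> (eta has_derivative Deta) (at p) \<and>
        Deta (1,0) = a11 *\<^sub>R Df (1,0) + a21 *\<^sub>R Df (0,1) \<and>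
        Deta (0,1) = a12 *\<^sub>R Df (1,0) + a22 *\<^sub>R Df (0,1) \<and>
        Hv = (a11 + a22) / 2)"

end

theory Submission
  imports Defs
begin

text \<open>
  At the parameter (a, v) the Birkhoff-Gauss image of the rotational surface is
  (-l cos v, -l sin v, t), where (l, t) is the unique solution of l > 0, l^(2m) + t^(2m) = 1 and
  t^(2m-1) u'(a) = l^(2m-1). In the frame (f_a, f_v) its differential is diagonal with entries -l'
  and -l/a, so H = -(l' + l/a)/2, i.e. (a l)' = -2 H a, and constant H means a l(a) = c1 - H a^2.
  Eliminating t from the profile equations expresses u'(a) through a l(a), which gives the
  formula; conversely, the formula pins down l and t explicitly, and with them the mean curvature.
\<close>

lemma odd_double_minus_one: "(m::nat) \<ge> 1 \<Longrightarrow> odd (2*m - 1)"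
  by (cases m) auto

lemma odd_power_eq_sgn_abs:
  assumes "odd n"
  shows "(e::real)^n = sgn e * \<bar>e\<bar>^n"
proof (cases "e \<ge> 0")
  case False
  then have "e^n = - ((- e)^n)"
    using assms by simp
  then show ?thesis
    using False by (simp add: sgn_if)
qed (use assms in \<open>auto simp: sgn_if zero_power odd_pos\<close>)

lemma power_powr_pred_ratio:
  assumes "(y::real) > 0" and "n \<ge> 1"
  shows "(y^n) powr ((real n - 1) / real n) = y^(n-1)"
proof -
  have "(y^n) powr ((real n - 1) / real n) = y powr (real n * ((real n - 1) / real n))"
    using assms(1) by (simp add: powr_powr flip: powr_realpow)
  also have "\<dots> = y powr real (n - 1)"
    using assms(2) by (simp add: of_nat_diff)
  finally show ?thesis
    using assms(1) by (simp add: powr_realpow)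
qed

lemma sgn_constant_on_interval:
  fixes f :: "real \<Rightarrow> real"
  assumes J: "is_interval J" and f: "continuous_on J f" and nz: "\<forall>x\<in>J. f x \<noteq> 0"
    and a: "a \<in> J" and b: "b \<in> J"
  shows "sgn (f a) = sgn (f b)"
proof -
  have "is_interval (f ` J)"
    using connected_continuous_image[OF f] J by (simp add: is_interval_connected_1)
  then have no_crossing: "\<not> (f c < 0 \<and> 0 < f c')" if "c \<in> J" "c' \<in> J" for c c'
    using mem_is_interval_1_I[of "f ` J" "f c" "f c'" 0] that nz by force
  show ?thesis
    using no_crossing[OF a b] no_crossing[OF b a] nz a b
    by (metis linorder_neqE_linordered_idom sgn_neg sgn_pos)
qed

lemma vector3_eq_axis_sum:
  "vector [a, b, c] = a *\<^sub>R (axis 1 1 :: real^3) + b *\<^sub>R axis 2 1 + c *\<^sub>R axis 3 1"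
  by (simp add: vec_eq_iff forall_3 axis_def)

lemma has_derivative_comp_fst:
  assumes "(f has_real_derivative D) (at (fst p))"
  shows "((\<lambda>p. f (fst p)) has_derivative (\<lambda>q. D * fst q)) (at p)"
  using has_derivative_compose[OF has_derivative_fst[OF has_derivative_ident]
      assms[unfolded has_field_derivative_def]]
  by simp

lemma has_vector_derivative_partial_fst:
  assumes "(f has_derivative D) (at (x, y))"
  shows "((\<lambda>a. f (a, y)) has_vector_derivative D (1, 0)) (at x)"
proof -
  have deriv: "((\<lambda>a. f (a, y)) has_derivative (\<lambda>h. D (h, 0))) (at x)"
    using has_derivative_compose[OF has_derivative_Pair[OF has_derivative_ident has_derivative_const] assms]
    by simp
  have "(\<lambda>h. h *\<^sub>R D (1, 0)) = (\<lambda>h. D (h, 0))"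
  proof
    fix h :: real
    show "h *\<^sub>R D (1, 0) = D (h, 0)"
      using linear_cmul[OF has_derivative_linear[OF assms], of h "(1, 0)"] by simp
  qed
  then show ?thesis
    unfolding has_vector_derivative_def using deriv by simp
qed

lemma has_vector_derivative_partial_snd:
  assumes "(f has_derivative D) (at (x, y))"
  shows "((\<lambda>b. f (x, b)) has_vector_derivative D (0, 1)) (at y)"
proof -
  have deriv: "((\<lambda>b. f (x, b)) has_derivative (\<lambda>k. D (0, k))) (at y)"
    using has_derivative_compose[OF has_derivative_Pair[OF has_derivative_const has_derivative_ident] assms]
    by simp
  have "(\<lambda>k. k *\<^sub>R D (0, 1)) = (\<lambda>k. D (0, k))"
  proof
    fix k :: real
    show "k *\<^sub>R D (0, 1) = D (0, k)"
      using linear_cmul[OF has_derivative_linear[OF assms], of k "(0, 1)"] by simp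
  qed
  then show ?thesis
    unfolding has_vector_derivative_def using deriv by simp
qed

text \<open>The radius l and height t of the Birkhoff-Gauss point (-l cos v, -l sin v, t) of a rotational
  graph with slope d: it lies on S, and grad Phi there is parallel to the normal (-x d cos v, -x d sin v, x).\<close>
definition bg_profile :: "nat \<Rightarrow> real \<Rightarrow> real \<Rightarrow> real \<Rightarrow> bool" where
  "bg_profile m d l t \<longleftrightarrow> l > 0 \<and> l^(2*m) + t^(2*m) = 1 \<and> t^(2*m-1) * d = l^(2*m-1)"

lemma Phi_rot_point: "Phi m (vector [- l * cos v, - l * sin v, t]) = l^(2*m) + t^(2*m)"
  by (simp add: Phi_def power_mult_distrib power_mult flip: distrib_left)

lemma gradPhi_rot_point:
  assumes "m \<ge> 1"
  shows "gradPhi m (vector [- l * cos v, - l * sin v, t]) =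
    vector [- (2 * real m * l^(2*m-1)) * cos v, - (2 * real m * l^(2*m-1)) * sin v, 2 * real m * t^(2*m-1)]"
proof -
  obtain k where k: "m = Suc k" using assms by (cases m) auto
  have "((l * cos v)^2 + (l * sin v)^2)^(m-1) * l = l^(2*m-1)"
    by (simp add: k power_mult_distrib power_mult[symmetric] mult.commute flip: distrib_left)
  then show ?thesis
    by (simp add: gradPhi_def vec_eq_iff forall_3 vector_3 mult.commute)
qed

lemma bg_point_either_orientation_iff:
  "bg_point m N e \<or> bg_point m (- N) e \<longleftrightarrow> Phi m e = 1 \<and> (\<exists>\<mu>. \<mu> \<noteq> 0 \<and> gradPhi m e = \<mu> *\<^sub>R N)"
proof -
  have "(\<exists>\<mu>>0. gradPhi m e = \<mu> *\<^sub>R N) \<or> (\<exists>\<mu>>0. gradPhi m e = \<mu> *\<^sub>R (- N))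
      \<longleftrightarrow> (\<exists>\<mu>. \<mu> \<noteq> 0 \<and> gradPhi m e = \<mu> *\<^sub>R N)"
  proof
    assume "\<exists>\<mu>. \<mu> \<noteq> 0 \<and> gradPhi m e = \<mu> *\<^sub>R N"
    then obtain \<mu> where \<mu>: "\<mu> \<noteq> 0" and g: "gradPhi m e = \<mu> *\<^sub>R N"
      by blast
    show "(\<exists>\<mu>>0. gradPhi m e = \<mu> *\<^sub>R N) \<or> (\<exists>\<mu>>0. gradPhi m e = \<mu> *\<^sub>R (- N))"
    proof (cases "\<mu> > 0")
      case False
      then have "- \<mu> > 0"
        using \<mu> by linarith
      then show ?thesis
        using g by (intro disjI2 exI[of _ "- \<mu>"]) simp
    qed (use g in blast)
  next
    assume "(\<exists>\<mu>>0. gradPhi m e = \<mu> *\<^sub>R N) \<or> (\<exists>\<mu>>0. gradPhi m e = \<mu> *\<^sub>R (- N))"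
    then show "\<exists>\<mu>. \<mu> \<noteq> 0 \<and> gradPhi m e = \<mu> *\<^sub>R N"
    proof (elim disjE exE conjE)
      fix \<mu> :: real
      assume "\<mu> > 0" "gradPhi m e = \<mu> *\<^sub>R (- N)"
      then show ?thesis
        by (intro exI[of _ "- \<mu>"]) simp
    next
      fix \<mu> :: real
      assume "\<mu> > 0" "gradPhi m e = \<mu> *\<^sub>R N"
      then show ?thesis
        by (intro exI[of _ \<mu>]) simp
    qed
  qed
  then show ?thesis
    unfolding bg_point_def by blast
qed

lemma gradPhi_rot_point_parallel_iff:
  assumes m: "m \<ge> 1" and x: "x > 0" and d: "d \<noteq> 0" and l: "l > 0"
  shows "(\<exists>\<mu>. \<mu> \<noteq> 0 \<and> gradPhi m (vector [- l * cos v, - l * sin v, t]) =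
            \<mu> *\<^sub>R vector [- x * d * cos v, - x * d * sin v, x])
    \<longleftrightarrow> t^(2*m-1) * d = l^(2*m-1)"
    (is "(\<exists>\<mu>. \<mu> \<noteq> 0 \<and> ?G = \<mu> *\<^sub>R ?N) \<longleftrightarrow> _")
proof
  let ?K = "2 * real m * l^(2*m-1)"
  assume "\<exists>\<mu>. \<mu> \<noteq> 0 \<and> ?G = \<mu> *\<^sub>R ?N"
  then obtain \<mu> where "?G = \<mu> *\<^sub>R ?N"
    by blast
  then have g: "vector [- ?K * cos v, - ?K * sin v, 2 * real m * t^(2*m-1)] = \<mu> *\<^sub>R ?N"
    unfolding gradPhi_rot_point[OF m] .
  have c1: "?K * cos v = \<mu> * x * d * cos v" and c2: "?K * sin v = \<mu> * x * d * sin v"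
    and c3: "2 * real m * t^(2*m-1) = \<mu> * x"
    using arg_cong[OF g, of "\<lambda>w. w $ 1"] arg_cong[OF g, of "\<lambda>w. w $ 2"] arg_cong[OF g, of "\<lambda>w. w $ 3"]
    by (simp_all add: mult.assoc)
  have "?K = ?K * ((sin v)^2 + (cos v)^2)"
    by simp
  also have "\<dots> = (?K * cos v) * cos v + (?K * sin v) * sin v"
    by algebra
  also have "\<dots> = \<mu> * x * d * ((sin v)^2 + (cos v)^2)"
    unfolding c1 c2 by algebra
  also have "\<dots> = \<mu> * x * d"
    by simp
  finally have "2 * real m * l^(2*m-1) = 2 * real m * t^(2*m-1) * d"
    using c3 by simp
  then show "t^(2*m-1) * d = l^(2*m-1)"
    using m by simp
next
  assume td: "t^(2*m-1) * d = l^(2*m-1)"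
  define \<mu> where "\<mu> = 2 * real m * t^(2*m-1) / x"
  have "t \<noteq> 0"
  proof
    assume "t = 0"
    then have "l^(2*m-1) = 0"
      using td m by (simp add: zero_power)
    then show False
      using l by simp
  qed
  then have "\<mu> \<noteq> 0"
    using x m by (simp add: \<mu>_def)
  moreover have "?G = \<mu> *\<^sub>R ?N"
    unfolding gradPhi_rot_point[OF m] using x td[symmetric] by (simp add: vec_eq_iff forall_3 \<mu>_def)
  ultimately show "\<exists>\<mu>. \<mu> \<noteq> 0 \<and> ?G = \<mu> *\<^sub>R ?N"
    by blast
qed

lemma rot_bg_point_iff:
  assumes m: "m \<ge> 1" and x: "x > 0" and d: "d \<noteq> 0"
    and N: "N = vector [- x * d * cos v, - x * d * sin v, x]"
  shows "(bg_point m N e \<or> bg_point m (- N) e) \<and> (\<exists>l>0. e$1 = - l * cos v \<and> e$2 = - l * sin v)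
    \<longleftrightarrow> (\<exists>l t. e = vector [- l * cos v, - l * sin v, t] \<and> bg_profile m d l t)"
proof -
  have bg_iff: "bg_point m N (vector [- l * cos v, - l * sin v, t]) \<or>
      bg_point m (- N) (vector [- l * cos v, - l * sin v, t])
    \<longleftrightarrow> l^(2*m) + t^(2*m) = 1 \<and> t^(2*m-1) * d = l^(2*m-1)" if "l > 0" for l t
    unfolding N bg_point_either_orientation_iff Phi_rot_point gradPhi_rot_point_parallel_iff[OF m x d that] ..
  show ?thesis
  proof
    assume bg: "(bg_point m N e \<or> bg_point m (- N) e) \<and> (\<exists>l>0. e$1 = - l * cos v \<and> e$2 = - l * sin v)"
    then obtain l where l: "l > 0" and e12: "e$1 = - l * cos v" "e$2 = - l * sin v"
      by blast
    define t where "t = e$3"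
    have e: "e = vector [- l * cos v, - l * sin v, t]"
      using e12 by (simp add: vec_eq_iff forall_3 t_def)
    from bg have "bg_profile m d l t"
      unfolding e bg_iff[OF l] bg_profile_def using l by blast
    with e show "\<exists>l t. e = vector [- l * cos v, - l * sin v, t] \<and> bg_profile m d l t"
      by blast
  next
    assume "\<exists>l t. e = vector [- l * cos v, - l * sin v, t] \<and> bg_profile m d l t"
    then obtain l t where e: "e = vector [- l * cos v, - l * sin v, t]" and p: "bg_profile m d l t"
      by blast
    have l: "l > 0"
      using p unfolding bg_profile_def by blast
    have "bg_point m N e \<or> bg_point m (- N) e"
      unfolding e bg_iff[OF l] using p unfolding bg_profile_def by blast
    moreover have "e$1 = - l * cos v \<and> e$2 = - l * sin v"
      unfolding e by simp
    ultimately show "(bg_point m N e \<or> bg_point m (- N) e) \<and> (\<exists>l>0. e$1 = - l * cos v \<and> e$2 = - l * sin v)"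
      using l by blast
  qed
qed

lemma bg_profile_exists:
  assumes m: "m \<ge> 1" and d: "d \<noteq> 0"
  shows "\<exists>l t. bg_profile m d l t"
proof -
  define r where "r = root (2*m-1) (1/d)"
  have r: "r^(2*m-1) = 1/d"
    unfolding r_def using odd_real_root_pow[OF odd_double_minus_one[OF m]] by simp
  have pos: "1 + r^(2*m) > 0"
    by (simp add: add_pos_nonneg zero_le_even_power)
  define l where "l = root (2*m) (1 / (1 + r^(2*m)))"
  have l: "l > 0"
    unfolding l_def using pos m by (simp add: real_root_gt_zero)
  have l2m: "l^(2*m) = 1 / (1 + r^(2*m))"
    unfolding l_def using pos m by (simp add: real_root_pow_pos2)
  have "bg_profile m d l (r * l)"
    unfolding bg_profile_def
  proof (intro conjI l)
    show "l^(2*m) + (r * l)^(2*m) = 1"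
      using l2m pos by (simp add: power_mult_distrib field_simps)
    show "(r * l)^(2*m-1) * d = l^(2*m-1)"
      using r d by (simp add: power_mult_distrib)
  qed
  then show ?thesis
    by blast
qed

lemma bg_profile_unique:
  assumes m: "m \<ge> 1" and p: "bg_profile m d l t" and p': "bg_profile m d l' t'"
  shows "l = l' \<and> t = t'"
proof -
  have ratio: "(t/l)^(2*m-1) = 1/d" and norm: "l^(2*m) * (1 + (t/l)^(2*m)) = 1"
    if "bg_profile m d l t" for l t
  proof -
    from that have l: "l > 0" and sum: "l^(2*m) + t^(2*m) = 1" and td: "t^(2*m-1) * d = l^(2*m-1)"
      unfolding bg_profile_def by auto
    have "d \<noteq> 0"
      using td l by auto
    then show "(t/l)^(2*m-1) = 1/d"
      using td l by (simp add: power_divide field_simps)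
    show "l^(2*m) * (1 + (t/l)^(2*m)) = 1"
      using sum l by (simp add: power_divide field_simps)
  qed
  have "t/l = t'/l'"
    using ratio[OF p] ratio[OF p'] odd_double_minus_one[OF m]
    by (metis odd_real_root_power_cancel)
  moreover have "1 + (t'/l')^(2*m) > 0"
    by (simp add: power_mult add_pos_nonneg)
  ultimately have "l^(2*m) = l'^(2*m)"
    using norm[OF p] norm[OF p'] by (metis mult_right_cancel less_irrefl)
  then have "l = l'"
    using p p' m unfolding bg_profile_def by (auto intro: power_eq_imp_eq_base)
  with \<open>t/l = t'/l'\<close> show ?thesis
    using p unfolding bg_profile_def by (simp add: field_simps)
qed

definition bg_profile_point :: "nat \<Rightarrow> real \<Rightarrow> real \<times> real" where
  "bg_profile_point m d = (THE p. bg_profile m d (fst p) (snd p))"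

lemma bg_profile_point_eq:
  assumes m: "m \<ge> 1" and p: "bg_profile m d l t"
  shows "bg_profile_point m d = (l, t)"
proof -
  have "q = (l, t)" if "bg_profile m d (fst q) (snd q)" for q
    using bg_profile_unique[OF m that p] by (simp add: prod_eq_iff)
  then show ?thesis
    unfolding bg_profile_point_def using p by (intro the_equality) auto
qed

lemma bg_profile_bg_profile_point:
  assumes "m \<ge> 1" and "d \<noteq> 0"
  shows "bg_profile m d (fst (bg_profile_point m d)) (snd (bg_profile_point m d))"
  using bg_profile_exists[OF assms] bg_profile_point_eq[OF assms(1)] by fastforce

definition slope_formula :: "nat \<Rightarrow> real \<Rightarrow> real \<Rightarrow> real \<Rightarrow> real \<Rightarrow> bool" where
  "slope_formula m s x A d \<longleftrightarrow> A > 0 \<and> x^(2*m) > A^(2*m) \<and>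
    d = s * A^(2*m - 1) / (x^(2*m) - A^(2*m)) powr ((2 * real m - 1) / (2 * real m))"

lemma bg_profile_imp_slope_formula:
  assumes m: "m \<ge> 1" and x: "x > 0" and p: "bg_profile m d l t"
  shows "slope_formula m (sgn d) x (x * l) d"
proof -
  from p have l: "l > 0" and sum: "l^(2*m) + t^(2*m) = 1" and td: "t^(2*m-1) * d = l^(2*m-1)"
    unfolding bg_profile_def by auto
  have "t \<noteq> 0" and "d \<noteq> 0"
    using td l m by (auto simp: zero_power)
  have gap: "x^(2*m) - (x*l)^(2*m) = (x * \<bar>t\<bar>)^(2*m)"
  proof -
    have "x^(2*m) - (x*l)^(2*m) = x^(2*m) * (1 - l^(2*m))"
      by (simp add: power_mult_distrib right_diff_distrib)
    also have "\<dots> = (x * \<bar>t\<bar>)^(2*m)"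
      using sum by (simp add: power_mult_distrib power_even_abs)
    finally show ?thesis .
  qed
  have gap_root: "(x^(2*m) - (x*l)^(2*m)) powr ((2 * real m - 1) / (2 * real m)) = (x * \<bar>t\<bar>)^(2*m-1)"
    unfolding gap using power_powr_pred_ratio[of "x * \<bar>t\<bar>" "2*m"] x \<open>t \<noteq> 0\<close> m by simp
  have t_odd: "t^(2*m-1) = sgn t * \<bar>t\<bar>^(2*m-1)"
    using odd_power_eq_sgn_abs[OF odd_double_minus_one[OF m]] .
  have "sgn d = sgn t"
  proof -
    have "sgn (t^(2*m-1)) = sgn t"
      unfolding t_odd using \<open>t \<noteq> 0\<close> by (simp add: sgn_mult)
    then have "sgn t * sgn d = 1"
      using arg_cong[OF td, of sgn] l by (simp add: sgn_mult)
    then show ?thesis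
      using \<open>t \<noteq> 0\<close> \<open>d \<noteq> 0\<close> by (auto simp: sgn_if split: if_splits)
  qed
  have "d = l^(2*m-1) / (sgn t * \<bar>t\<bar>^(2*m-1))"
    using td \<open>t \<noteq> 0\<close> unfolding t_odd by (simp add: field_simps sgn_if)
  also have "\<dots> = sgn d * (x*l)^(2*m-1) / (x * \<bar>t\<bar>)^(2*m-1)"
    using x \<open>t \<noteq> 0\<close> \<open>sgn d = sgn t\<close> by (simp add: power_mult_distrib sgn_if)
  finally have "d = sgn d * (x*l)^(2*m-1) / (x^(2*m) - (x*l)^(2*m)) powr ((2 * real m - 1) / (2 * real m))"
    unfolding gap_root .
  moreover have "x^(2*m) - (x*l)^(2*m) > 0"
    unfolding gap using x \<open>t \<noteq> 0\<close> by simp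
  ultimately show ?thesis
    unfolding slope_formula_def using x l by simp
qed

lemma slope_formula_imp_bg_profile:
  assumes m: "m \<ge> 1" and x: "x > 0" and s: "s \<in> {-1, 1}" and slope: "slope_formula m s x A d"
  shows "bg_profile m d (A/x) (s * (1 - (A/x)^(2*m)) powr (1 / (2 * real m)))"
proof -
  from slope have A: "A > 0" and xA: "x^(2*m) > A^(2*m)"
    and d: "d = s * A^(2*m-1) / (x^(2*m) - A^(2*m)) powr ((2 * real m - 1) / (2 * real m))"
    unfolding slope_formula_def by auto
  define l where "l = A / x"
  define B where "B = 1 - l^(2*m)"
  define q where "q = (2 * real m - 1) / (2 * real m)"
  have "l > 0"
    using A x by (simp add: l_def)
  have x2m: "x^(2*m) > 0"
    using x by simp
  have gap: "x^(2*m) - A^(2*m) = x^(2*m) * B"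
    using x by (simp add: B_def l_def power_divide field_simps)
  then have "x^(2*m) * B > 0"
    using xA by linarith
  then have "B > 0"
    using x2m by (simp add: zero_less_mult_iff)
  define W where "W = B powr (1 / (2 * real m))"
  have W_even: "W^(2*m) = B" and W_odd: "W^(2*m-1) = B powr q"
    unfolding W_def using \<open>B > 0\<close> m by (simp_all add: powr_power q_def of_nat_diff)
  have gap_root: "(x^(2*m) - A^(2*m)) powr q = x^(2*m-1) * B powr q"
    unfolding gap using power_powr_pred_ratio[OF x, of "2*m"] x2m \<open>B > 0\<close> m
    by (simp add: powr_mult q_def)
  have s_even: "s^(2*m) = 1" and s_odd: "s^(2*m-1) * s = 1"
    using s m by (auto simp: power_mult power_0_left mult.commute[of _ "-1"] power_minus1_even
        simp flip: power_Suc)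
  have "l^(2*m) + (s * W)^(2*m) = 1"
    using s_even by (simp add: power_mult_distrib W_even B_def)
  moreover have "(s * W)^(2*m-1) * d = l^(2*m-1)"
  proof -
    have "(s * W)^(2*m-1) * d = (s^(2*m-1) * s) * (B powr q * A^(2*m-1) / (x^(2*m-1) * B powr q))"
      unfolding d q_def[symmetric] gap_root power_mult_distrib W_odd by simp
    also have "\<dots> = A^(2*m-1) / x^(2*m-1)"
      using \<open>B > 0\<close> s_odd by simp
    finally show ?thesis
      by (simp add: l_def power_divide)
  qed
  ultimately show ?thesis
    using \<open>l > 0\<close> unfolding bg_profile_def l_def W_def B_def by simp
qed

lemma fbar_eq_axis_sum:
  "fbar u p = (fst p * cos (snd p)) *\<^sub>R (axis 1 1 :: real^3) + (fst p * sin (snd p)) *\<^sub>R axis 2 1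
    + u (fst p) *\<^sub>R axis 3 1"
  unfolding fbar_def by (simp add: vector3_eq_axis_sum)

lemma has_vector_derivative_fbar_fst:
  assumes "(u has_real_derivative d) (at x)"
  shows "((\<lambda>a. fbar u (a, v)) has_vector_derivative vector [cos v, sin v, d]) (at x)"
  unfolding fbar_eq_axis_sum vector3_eq_axis_sum
  by (rule derivative_eq_intros assms refl | simp)+

lemma has_vector_derivative_fbar_snd:
  "((\<lambda>w. fbar u (x, w)) has_vector_derivative vector [- x * sin v, x * cos v, 0]) (at v)"
  unfolding fbar_eq_axis_sum vector3_eq_axis_sum
  by (rule derivative_eq_intros refl | simp add: mult.commute)+

lemma rot_normal_eq:
  assumes "(u has_real_derivative d) (at x)"
  shows "rot_normal u (x, v) = vector [- x * d * cos v, - x * d * sin v, x]"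
  unfolding rot_normal_def fst_conv snd_conv
    vector_derivative_at[OF has_vector_derivative_fbar_fst[OF assms]]
    vector_derivative_at[OF has_vector_derivative_fbar_snd]
  by (simp add: cross3_def vec_eq_iff forall_3 algebra_simps flip: power2_eq_square distrib_left)

lemma rot_eta_eq:
  assumes m: "m \<ge> 1" and x: "x > 0" and u: "(u has_real_derivative d) (at x)" and d: "d \<noteq> 0"
  shows "rot_eta m u (x, v) =
    vector [- fst (bg_profile_point m d) * cos v, - fst (bg_profile_point m d) * sin v, snd (bg_profile_point m d)]"
  unfolding rot_eta_def snd_conv rot_bg_point_iff[OF m x d rot_normal_eq[OF u]]
proof (rule the_equality)
  show "\<exists>l t. vector [- fst (bg_profile_point m d) * cos v, - fst (bg_profile_point m d) * sin v,
      snd (bg_profile_point m d)] = vector [- l * cos v, - l * sin v, t] \<and> bg_profile m d l t"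
    using bg_profile_bg_profile_point[OF m d] by blast
next
  fix e :: "real^3"
  assume "\<exists>l t. e = vector [- l * cos v, - l * sin v, t] \<and> bg_profile m d l t"
  then show "e = vector [- fst (bg_profile_point m d) * cos v, - fst (bg_profile_point m d) * sin v,
      snd (bg_profile_point m d)]"
    using bg_profile_point_eq[OF m] by force
qed

lemma has_derivative_fbar:
  assumes "(u has_real_derivative d) (at x)"
  shows "(fbar u has_derivative
      (\<lambda>q. vector [fst q * cos v - x * sin v * snd q, fst q * sin v + x * cos v * snd q, d * fst q])) (at (x, v))"
proof -
  have fbar: "fbar u = (\<lambda>p. (fst p * cos (snd p)) *\<^sub>R (axis 1 1 :: real^3)
      + (fst p * sin (snd p)) *\<^sub>R axis 2 1 + u (fst p) *\<^sub>R axis 3 1)"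
    by (rule ext) (rule fbar_eq_axis_sum)
  have u: "((\<lambda>p. u (fst p)) has_derivative (\<lambda>q. d * fst q)) (at (x, v))"
    using has_derivative_comp_fst[of u d "(x, v)"] assms by simp
  show ?thesis
    unfolding fbar vector3_eq_axis_sum
    apply (rule has_derivative_eq_rhs)
     apply (rule derivative_eq_intros u refl | simp)+
    by (rule ext) (simp add: algebra_simps)
qed

lemma has_derivative_rotated_profile:
  assumes "(L has_real_derivative L') (at x)" and "(E has_real_derivative E') (at x)"
  shows "((\<lambda>p. vector [- L (fst p) * cos (snd p), - L (fst p) * sin (snd p), E (fst p)] :: real^3)
    has_derivative (\<lambda>q. vector [- L' * fst q * cos v + L x * sin v * snd q,
      - L' * fst q * sin v - L x * cos v * snd q, E' * fst q])) (at (x, v))"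
proof -
  have L: "((\<lambda>p. L (fst p)) has_derivative (\<lambda>q. L' * fst q)) (at (x, v))"
    and E: "((\<lambda>p. E (fst p)) has_derivative (\<lambda>q. E' * fst q)) (at (x, v))"
    using has_derivative_comp_fst[of L L' "(x, v)"] has_derivative_comp_fst[of E E' "(x, v)"] assms
    by simp_all
  show ?thesis
    unfolding vector3_eq_axis_sum
    apply (rule has_derivative_eq_rhs)
     apply (rule derivative_eq_intros L E refl | simp)+
    by (rule ext) (simp add: algebra_simps)
qed

locale rotational_graph =
  fixes m :: nat and u :: "real \<Rightarrow> real" and J :: "real set"
  assumes m_ge_1: "m \<ge> 1" and open_J: "open J" and J_pos: "J \<subseteq> {0<..}"
    and has_deriv_u: "\<And>a. a \<in> J \<Longrightarrow> (u has_real_derivative deriv u a) (at a)"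
    and deriv_u_nonzero: "\<And>a. a \<in> J \<Longrightarrow> deriv u a \<noteq> 0"
begin

definition eta_radius :: "real \<Rightarrow> real" where
  "eta_radius a = fst (bg_profile_point m (deriv u a))"

definition eta_height :: "real \<Rightarrow> real" where
  "eta_height a = snd (bg_profile_point m (deriv u a))"

lemma rot_eta_on_J:
  assumes "a \<in> J"
  shows "rot_eta m u (a, w) = vector [- eta_radius a * cos w, - eta_radius a * sin w, eta_height a]"
  using rot_eta_eq[OF m_ge_1 _ has_deriv_u deriv_u_nonzero] assms J_pos
  unfolding eta_radius_def eta_height_def by auto

lemma bg_profile_eta:
  assumes "a \<in> J"
  shows "bg_profile m (deriv u a) (eta_radius a) (eta_height a)"
  using bg_profile_bg_profile_point[OF m_ge_1 deriv_u_nonzero[OF assms]]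
  unfolding eta_radius_def eta_height_def .

lemma eta_height_nonzero:
  assumes "a \<in> J"
  shows "eta_height a \<noteq> 0"
proof
  assume "eta_height a = 0"
  then show False
    using bg_profile_eta[OF assms] m_ge_1 unfolding bg_profile_def by (auto simp: zero_power)
qed

lemma eta_radius_power_less_one:
  assumes "a \<in> J"
  shows "eta_radius a ^ (2*m) < 1"
proof -
  have "eta_height a ^ (2*m) > 0"
    using eta_height_nonzero[OF assms] by (simp add: zero_less_power_eq)
  then show ?thesis
    using bg_profile_eta[OF assms] unfolding bg_profile_def by simp
qed

lemma eta_height_deriv:
  assumes x: "x \<in> J"
    and L: "(eta_radius has_real_derivative L') (at x)" and E: "(eta_height has_real_derivative E') (at x)"
  shows "E' = - L' * deriv u x"
proof -
  let ?S = "\<lambda>a. eta_radius a ^ (2*m) + eta_height a ^ (2*m)"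
  have "(?S has_real_derivative
      real (2*m) * eta_radius x ^ (2*m-1) * L' + real (2*m) * eta_height x ^ (2*m-1) * E') (at x)"
    by (rule derivative_eq_intros L E refl | simp)+
  moreover have "(?S has_real_derivative 0) (at x)"
    by (rule has_field_derivative_transform_within_open[OF DERIV_const open_J x])
      (use bg_profile_eta in \<open>auto simp: bg_profile_def\<close>)
  ultimately have "real (2*m) * (eta_radius x ^ (2*m-1) * L' + eta_height x ^ (2*m-1) * E') = 0"
    by (simp add: distrib_left mult.assoc DERIV_unique)
  then have "eta_radius x ^ (2*m-1) * L' + eta_height x ^ (2*m-1) * E' = 0"
    using m_ge_1 by simp
  moreover have "eta_radius x ^ (2*m-1) = eta_height x ^ (2*m-1) * deriv u x"
    using bg_profile_eta[OF x] unfolding bg_profile_def by simp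
  ultimately have "eta_height x ^ (2*m-1) * (E' + L' * deriv u x) = 0"
    by (simp add: algebra_simps)
  then show ?thesis
    using eta_height_nonzero[OF x] by (simp add: eq_neg_iff_add_eq_0)
qed

lemma mink_mean_curv_rot_eta:
  assumes x: "x \<in> J"
    and L: "(eta_radius has_real_derivative L') (at x)" and E: "(eta_height has_real_derivative E') (at x)"
  shows "mink_mean_curv (fbar u) (rot_eta m u) (x, v) ((- L' - eta_radius x / x) / 2)"
proof -
  define d where "d = deriv u x"
  let ?Df = "\<lambda>q. vector [fst q * cos v - x * sin v * snd q, fst q * sin v + x * cos v * snd q, d * fst q]
    :: real^3"
  let ?Deta = "\<lambda>q. vector [- L' * fst q * cos v + eta_radius x * sin v * snd q,
    - L' * fst q * sin v - eta_radius x * cos v * snd q, E' * fst q] :: real^3"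
  have "x > 0"
    using x J_pos by auto
  have Df: "(fbar u has_derivative ?Df) (at (x, v))"
    using has_derivative_fbar[OF has_deriv_u[OF x]] by (simp add: d_def)
  have Deta: "(rot_eta m u has_derivative ?Deta) (at (x, v))"
  proof (rule has_derivative_transform_within_open[OF has_derivative_rotated_profile[OF L E]])
    show "open (J \<times> (UNIV :: real set))"
      using open_J by (simp add: open_Times)
    show "(x, v) \<in> J \<times> UNIV"
      using x by simp
  qed (auto simp: rot_eta_on_J)
  have "E' = - L' * d"
    using eta_height_deriv[OF x L E] by (simp add: d_def)
  then have D1: "?Deta (1, 0) = (- L') *\<^sub>R ?Df (1, 0) + 0 *\<^sub>R ?Df (0, 1)"
    by (simp add: vec_eq_iff forall_3)
  have D2: "?Deta (0, 1) = 0 *\<^sub>R ?Df (1, 0) + (- eta_radius x / x) *\<^sub>R ?Df (0, 1)"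
    using \<open>x > 0\<close> by (simp add: vec_eq_iff forall_3)
  show ?thesis
    unfolding mink_mean_curv_def
    by (intro exI[of _ ?Df] exI[of _ ?Deta] exI[of _ "- L'"] exI[of _ 0] exI[of _ 0]
        exI[of _ "- eta_radius x / x"] conjI Df Deta D1 D2) simp
qed

lemma mink_mean_curv_rot_eta_imp_deriv:
  assumes x: "x \<in> J" and MC: "mink_mean_curv (fbar u) (rot_eta m u) (x, 0) Hv"
  shows "\<exists>L'. (eta_radius has_real_derivative L') (at x) \<and> Hv = (- L' - eta_radius x / x) / 2"
proof -
  obtain Df Deta a11 a12 a21 a22 where
    Df: "(fbar u has_derivative Df) (at (x, 0))" and Deta: "(rot_eta m u has_derivative Deta) (at (x, 0))"
    and e1: "Deta (1, 0) = a11 *\<^sub>R Df (1, 0) + a21 *\<^sub>R Df (0, 1)"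
    and e2: "Deta (0, 1) = a12 *\<^sub>R Df (1, 0) + a22 *\<^sub>R Df (0, 1)"
    and Hv: "Hv = (a11 + a22) / 2"
    using MC unfolding mink_mean_curv_def by blast
  have "x > 0"
    using x J_pos by auto
  have "Df = (\<lambda>q. vector [fst q * cos 0 - x * sin 0 * snd q, fst q * sin 0 + x * cos 0 * snd q,
      deriv u x * fst q])"
    using has_derivative_unique[OF Df has_derivative_fbar[OF has_deriv_u[OF x]]] .
  then have Df1: "Df (1, 0) = vector [1, 0, deriv u x]" and Df2: "Df (0, 1) = vector [0, x, 0]"
    by simp_all
  have radius_deriv: "(eta_radius has_real_derivative - (Deta (1, 0) $ 1)) (at x)"
  proof -
    have "((\<lambda>a. rot_eta m u (a, 0) $ 1) has_vector_derivative Deta (1, 0) $ 1) (at x)"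
      using bounded_linear.has_vector_derivative[OF bounded_linear_vec_nth
          has_vector_derivative_partial_fst[OF Deta]] .
    then have "((\<lambda>a. - (rot_eta m u (a, 0) $ 1)) has_real_derivative - (Deta (1, 0) $ 1)) (at x)"
      by (intro DERIV_minus) (simp add: has_real_derivative_iff_has_vector_derivative)
    then show ?thesis
      by (rule has_field_derivative_transform_within_open[OF _ open_J x]) (simp add: rot_eta_on_J)
  qed
  have "Deta (0, 1) = vector [0, - eta_radius x, 0]"
  proof (rule vector_derivative_unique_at)
    show "((\<lambda>w. rot_eta m u (x, w)) has_vector_derivative Deta (0, 1)) (at 0)"
      by (rule has_vector_derivative_partial_snd[OF Deta])
    show "((\<lambda>w. rot_eta m u (x, w)) has_vector_derivative vector [0, - eta_radius x, 0]) (at 0)"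
      unfolding rot_eta_on_J[OF x] vector3_eq_axis_sum
      by (rule derivative_eq_intros refl | simp)+
  qed
  then have "a11 = Deta (1, 0) $ 1" and "a22 = - eta_radius x / x"
    using arg_cong[OF e1, of "\<lambda>w. w $ 1"] arg_cong[OF e2, of "\<lambda>w. w $ 1"]
      arg_cong[OF e2, of "\<lambda>w. w $ 2"] \<open>x > 0\<close>
    by (simp_all add: Df1 Df2 field_simps)
  then show ?thesis
    using radius_deriv Hv by auto
qed

lemma const_mean_curv_imp_first_integral:
  assumes "is_interval J" and MC: "\<forall>p\<in>J \<times> UNIV. mink_mean_curv (fbar u) (rot_eta m u) p H"
  shows "\<exists>c. \<forall>x\<in>J. x * eta_radius x = c - H * x^2"
proof -
  have "((\<lambda>a. a * eta_radius a + H * a^2) has_real_derivative 0) (at x within J)" if x: "x \<in> J" for x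
  proof -
    obtain L' where L': "(eta_radius has_real_derivative L') (at x)"
      and H: "H = (- L' - eta_radius x / x) / 2"
      using mink_mean_curv_rot_eta_imp_deriv[OF x] MC x by blast
    have "x > 0"
      using x J_pos by auto
    have "((\<lambda>a. a * eta_radius a + H * a^2) has_real_derivative
        eta_radius x + x * L' + H * (2 * x)) (at x)"
      by (auto intro!: derivative_eq_intros L')
    moreover have "eta_radius x + x * L' + H * (2 * x) = 0"
      using \<open>x > 0\<close> unfolding H by (simp add: field_simps)
    ultimately show ?thesis
      by (simp add: has_field_derivative_at_within)
  qed
  then obtain c where "\<forall>x\<in>J. x * eta_radius x + H * x^2 = c"
    using has_field_derivative_zero_constant[OF is_interval_convex[OF assms(1)]] by blast
  then show ?thesis
    by (intro exI[of _ c]) (auto simp: eq_diff_eq)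
qed

lemma first_integral_imp_const_mean_curv:
  assumes radius: "\<forall>a\<in>J. a * eta_radius a = c - H * a^2"
    and height: "\<forall>a\<in>J. eta_height a = s * (1 - eta_radius a ^ (2*m)) powr (1 / (2 * real m))"
  shows "\<forall>p\<in>J \<times> UNIV. mink_mean_curv (fbar u) (rot_eta m u) p H"
proof
  fix p
  assume "p \<in> J \<times> (UNIV :: real set)"
  then obtain x v where p: "p = (x, v)" and x: "x \<in> J"
    by auto
  define L where "L a = c / a - H * a" for a
  have L_eq: "eta_radius a = L a" if "a \<in> J" for a
  proof -
    have "a > 0"
      using that J_pos by auto
    moreover have "a * eta_radius a = c - H * a^2"
      using radius that by blast
    ultimately have "eta_radius a = (c - H * a^2) / a"
      by (simp add: eq_divide_eq mult.commute)
    then show ?thesis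
      using \<open>a > 0\<close> by (simp add: L_def diff_divide_distrib power2_eq_square)
  qed
  have "x > 0"
    using x J_pos by auto
  have L': "(L has_real_derivative - c / x^2 - H) (at x)"
    unfolding L_def[abs_def] using \<open>x > 0\<close>
    by (auto intro!: derivative_eq_intros simp: field_simps power2_eq_square)
  have radius_deriv: "(eta_radius has_real_derivative - c / x^2 - H) (at x)"
    by (rule has_field_derivative_transform_within_open[OF L' open_J x]) (simp add: L_eq)
  obtain E' where height_deriv: "(eta_height has_real_derivative E') (at x)"
  proof -
    obtain D where D: "((\<lambda>a. 1 - L a ^ (2*m)) has_real_derivative D) (at x)"
      using DERIV_diff[OF DERIV_const DERIV_power[OF L']] by blast
    have "1 - L x ^ (2*m) > 0"
      using eta_radius_power_less_one[OF x] L_eq[OF x] by simp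
    then obtain E' where
      "((\<lambda>a. s * (1 - L a ^ (2*m)) powr (1 / (2 * real m))) has_real_derivative E') (at x)"
      using DERIV_cmult[OF DERIV_fun_powr[OF D]] by blast
    then have "(eta_height has_real_derivative E') (at x)"
      by (rule has_field_derivative_transform_within_open[OF _ open_J x]) (simp add: height L_eq)
    then show thesis
      by (rule that)
  qed
  have H: "H = (- (- c / x^2 - H) - eta_radius x / x) / 2"
    unfolding L_eq[OF x] L_def using \<open>x > 0\<close> by (simp add: field_simps power2_eq_square)
  show "mink_mean_curv (fbar u) (rot_eta m u) p H"
    unfolding p by (subst H) (rule mink_mean_curv_rot_eta[OF x radius_deriv height_deriv])
qed

lemma deriv_u_slope_formula:
  assumes "a \<in> J"
  shows "slope_formula m (sgn (deriv u a)) a (a * eta_radius a) (deriv u a)"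
  using bg_profile_imp_slope_formula[OF m_ge_1 _ bg_profile_eta[OF assms]] assms J_pos by auto

lemma eta_of_slope_formula:
  assumes a: "a \<in> J" and s: "s \<in> {-1, 1}" and slope: "slope_formula m s a A (deriv u a)"
  shows "a * eta_radius a = A \<and> eta_height a = s * (1 - eta_radius a ^ (2*m)) powr (1 / (2 * real m))"
proof -
  have "a > 0"
    using a J_pos by auto
  have "eta_radius a = A / a \<and> eta_height a = s * (1 - (A/a)^(2*m)) powr (1 / (2 * real m))"
    using bg_profile_unique[OF m_ge_1 bg_profile_eta[OF a]
        slope_formula_imp_bg_profile[OF m_ge_1 \<open>a > 0\<close> s slope]] .
  then show ?thesis
    using \<open>a > 0\<close> by simp
qed

lemma const_mean_curv_imp_slope_formula:
  assumes "is_interval J" and sgn_deriv: "\<And>x. x \<in> J \<Longrightarrow> sgn (deriv u x) = s"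
    and "\<forall>p\<in>J \<times> UNIV. mink_mean_curv (fbar u) (rot_eta m u) p H"
  shows "\<exists>c. \<forall>x\<in>J. slope_formula m s x (c - H * x^2) (deriv u x)"
proof -
  obtain c where "\<forall>x\<in>J. x * eta_radius x = c - H * x^2"
    using const_mean_curv_imp_first_integral assms(1,3) by blast
  then show ?thesis
    using deriv_u_slope_formula sgn_deriv by (intro exI[of _ c]) auto
qed

lemma slope_formula_imp_const_mean_curv:
  assumes s: "s \<in> {-1, 1}" and slope: "\<forall>x\<in>J. slope_formula m s x (c - H * x^2) (deriv u x)"
  shows "\<forall>p\<in>J \<times> UNIV. mink_mean_curv (fbar u) (rot_eta m u) p H"
proof (rule first_integral_imp_const_mean_curv)
  show "\<forall>a\<in>J. a * eta_radius a = c - H * a^2"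
    and "\<forall>a\<in>J. eta_height a = s * (1 - eta_radius a ^ (2*m)) powr (1 / (2 * real m))"
    using eta_of_slope_formula[OF _ s] slope by auto
qed

end

theorem theorem6p1:
  fixes m :: nat and H :: real and J :: "real set" and u :: "real \<Rightarrow> real"
  assumes "m \<ge> 2" and "H \<noteq> 0"
    and "open J" and "is_interval J" and "J \<noteq> {}" and "J \<subseteq> {0<..}"
    and "\<forall>k. \<forall>x\<in>J. ((deriv ^^ k) u) differentiable (at x)"
    and "\<forall>x\<in>J. deriv u x \<noteq> 0"
  shows "(\<forall>p\<in>J \<times> UNIV. mink_mean_curv (fbar u) (rot_eta m u) p H) \<longleftrightarrow>
    (\<exists>c1. \<exists>s\<in>{-1, 1::real}. \<forall>x\<in>J.
        c1 - H * x^2 > 0 \<and> x^(2*m) > (c1 - H * x^2)^(2*m) \<and>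
        deriv u x = s * (c1 - H * x^2)^(2*m - 1) /
          (x^(2*m) - (c1 - H * x^2)^(2*m)) powr ((2 * real m - 1) / (2 * real m)))"
proof -
  have u_deriv: "(u has_real_derivative deriv u a) (at a)"
    and deriv_cont: "isCont (deriv u) a" if "a \<in> J" for a
    using assms(7) that spec[OF assms(7), of 0] spec[OF assms(7), of 1]
    by (auto simp: DERIV_deriv_iff_real_differentiable differentiable_imp_continuous_within)
  interpret rotational_graph m u J
    using assms(1,3,6,8) u_deriv by unfold_locales auto
  obtain x0 where "x0 \<in> J"
    using assms(5) by blast
  define s where "s = sgn (deriv u x0)"
  have sgn_deriv: "sgn (deriv u x) = s" if "x \<in> J" for x
    unfolding s_def using sgn_constant_on_interval[OF assms(4) _ _ that \<open>x0 \<in> J\<close>] deriv_cont assms(8)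
    by (simp add: continuous_at_imp_continuous_on)
  have "s \<in> {-1, 1}"
    using assms(8) \<open>x0 \<in> J\<close> by (auto simp: s_def sgn_if)
  have "(\<forall>p\<in>J \<times> UNIV. mink_mean_curv (fbar u) (rot_eta m u) p H) \<longleftrightarrow>
      (\<exists>c1. \<exists>s\<in>{-1, 1}. \<forall>x\<in>J. slope_formula m s x (c1 - H * x^2) (deriv u x))"
    using const_mean_curv_imp_slope_formula[OF assms(4) sgn_deriv] \<open>s \<in> {-1, 1}\<close>
      slope_formula_imp_const_mean_curv by blast
  then show ?thesis
    unfolding slope_formula_def .
qed

end
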